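(* Let $v$ satisfy the standing assumptions and the doubling condition, and let $g(x)=v(1-x^{-1})$. Fix $A>1$, set $b_0=1$ and inductively $b_{n+1}=\min\{l\in\mathbb{N}: g(2^l)>A\,g(2^{b_n})\}$. Then $u(z)=\operatorname{Re}\sum_{k=0}^\infty g(2^{b_k})z^{2^{b_k}}$, $z\in\mathbb{D}$, belongs to $h^\infty_v$.
   Context: Standing assumptions: $v:[0,1)\to[1,\infty)$ is positive, increasing, continuous, $v(0)=1$, $\lim_{r\to1}v(r)=+\infty$. Doubling condition: there is $D\ge1$ with $v(1-d)\le D\,v(1-2d)$ for all $d\in(0,1/2]$. $h^\infty_v$ is the set of real harmonic $u$ on $\mathbb{D}$ with $|u(z)|\le Kv(|z|)$ for some $K>0$. *)

theory Defs
  imports "HOL-Analysis.Analysis"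
begin

definition px :: "(complex \<Rightarrow> real) \<Rightarrow> complex \<Rightarrow> real" where
  "px u z = deriv (\<lambda>t::real. u (z + of_real t)) 0"

definition py :: "(complex \<Rightarrow> real) \<Rightarrow> complex \<Rightarrow> real" where
  "py u z = deriv (\<lambda>t::real. u (z + \<i> * of_real t)) 0"

definition harmonic_on :: "complex set \<Rightarrow> (complex \<Rightarrow> real) \<Rightarrow> bool" where
  "harmonic_on S u \<longleftrightarrow> open S \<and>
     u differentiable_on S \<and>
     px u differentiable_on S \<and> py u differentiable_on S \<and>
     continuous_on S (px (px u)) \<and> continuous_on S (py (px u)) \<and>
     continuous_on S (px (py u)) \<and> continuous_on S (py (py u)) \<and>
     (\<forall>z\<in>S. px (px u) z + py (py u) z = 0)"

definition hinf :: "(real \<Rightarrow> real) \<Rightarrow> (complex \<Rightarrow> real) set" where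
  "hinf v = {u. harmonic_on (ball 0 1) u \<and>
                 (\<exists>K>0. \<forall>z\<in>ball 0 1. \<bar>u z\<bar> \<le> K * v (norm z))}"

definition gfun :: "(real \<Rightarrow> real) \<Rightarrow> real \<Rightarrow> real" where
  "gfun v x = v (1 - inverse x)"

fun bseq :: "(real \<Rightarrow> real) \<Rightarrow> real \<Rightarrow> nat \<Rightarrow> nat" where
  "bseq v A 0 = 1"
| "bseq v A (Suc n) = (LEAST l::nat. gfun v (2 ^ l) > A * gfun v (2 ^ bseq v A n))"

end

theory Submission
  imports Defs "HOL-Complex_Analysis.Cauchy_Integral_Formula"
begin

(* Write c_k = g(2^{b_k}) and N_k = 2^{b_k}, so that u = Re F with
   F(z) = \<Sum>_k c_k z^{N_k}.
   Harmonicity: once \<Sum>_k c_k r^{N_k} converges for all 0 \<le> r < 1, the lacunary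
   series F is holomorphic on the unit disc, and the real part of a holomorphic
   function is harmonic (its pure second partials are Re F'' and -Re F'').
   Growth: by the choice of b, c_{k+1} > A c_k, while the doubling condition gives
   c_{k+1} \<le> D A c_k.  For r in [t_m, t_{m+1}), where t_k = 1 - 2^{-b_k}, the head
   \<Sum>_{k\<le>m} c_k is bounded by A/(A-1) c_m \<le> A/(A-1) v(r), and in the tail
   r^{N_{m+1+i}} \<le> exp(-2^i), so it is at most c_{m+1} S \<le> D A S v(r) with
   S = \<Sum>_i (DA)^i exp(-2^i); for r < t_0 the whole series is a tail, bounded by
   c_0 S \<le> D v(0) S \<le> D S v(r).  Hence \<Sum>_k c_k r^{N_k} \<le> B v(r) for a constant B.
   The file first treats real parts of holomorphic functions and lacunary series in
   general, then develops the growth estimates in two locales (a doubling weight v,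
   and the sequence b built from it), and finally assembles lemma8. *)

section \<open>Real parts of holomorphic functions are harmonic\<close>

lemma Re_directional_derivative:
  fixes G :: "complex \<Rightarrow> complex" and g :: "complex \<Rightarrow> real"
  assumes S: "open S" "z \<in> S" and eq: "\<And>y. y \<in> S \<Longrightarrow> g y = Re (G y)"
    and d: "(G has_field_derivative d) (at z)"
  shows "((\<lambda>t::real. g (z + of_real t * w)) has_real_derivative Re (w * d)) (at 0)"
proof -
  have line: "((\<lambda>t::real. z + of_real t * w) has_derivative (\<lambda>t. of_real t * w)) (at 0)"
    by (auto intro!: derivative_eq_intros)
  have "(G has_derivative (\<lambda>h. h * d)) (at ((\<lambda>t::real. z + of_real t * w) 0))"
    using d by (simp add: has_field_derivative_def mult_commute_abs)
  from has_derivative_compose[OF line this]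
  have "((\<lambda>t::real. Re (G (z + of_real t * w))) has_derivative (\<lambda>t. Re (of_real t * w * d))) (at 0)"
    by (intro has_derivative_Re) simp
  moreover have "(\<lambda>t. Re (of_real t * w * d)) = (*) (Re (w * d))"
    by (auto simp: fun_eq_iff mult.assoc)
  ultimately have "((\<lambda>t::real. Re (G (z + of_real t * w))) has_real_derivative Re (w * d)) (at 0)"
    by (simp add: has_field_derivative_def)
  moreover have "open ((\<lambda>t::real. z + of_real t * w) -` S)"
    by (rule continuous_open_vimage[OF S(1)]) (auto intro!: continuous_intros)
  ultimately show ?thesis
    by (rule has_field_derivative_transform_within_open) (use S eq in auto)
qed

lemma partials_of_Re:
  fixes G :: "complex \<Rightarrow> complex" and g :: "complex \<Rightarrow> real"
  assumes "open S" "z \<in> S" "\<And>y. y \<in> S \<Longrightarrow> g y = Re (G y)"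
    and "(G has_field_derivative d) (at z)"
  shows "px g z = Re d" "py g z = Re (\<i> * d)"
  using DERIV_imp_deriv[OF Re_directional_derivative[OF assms, of 1]]
    DERIV_imp_deriv[OF Re_directional_derivative[OF assms, of \<i>]]
  by (simp_all add: px_def py_def mult.commute)

lemma differentiable_Re:
  fixes G :: "complex \<Rightarrow> complex" and g :: "complex \<Rightarrow> real"
  assumes S: "open S" "z \<in> S" and eq: "\<And>y. y \<in> S \<Longrightarrow> g y = Re (G y)"
    and d: "(G has_field_derivative d) (at z)"
  shows "g differentiable (at z)"
proof -
  have "(G has_derivative (\<lambda>h. d * h)) (at z)" using d by (simp add: has_field_derivative_def)
  then have "((\<lambda>y. Re (G y)) has_derivative (\<lambda>h. Re (d * h))) (at z)" by (rule has_derivative_Re)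
  then have "(g has_derivative (\<lambda>h. Re (d * h))) (at z)"
    by (rule has_derivative_transform_within_open[OF _ S]) (use eq in auto)
  then show ?thesis by (auto simp: differentiable_def)
qed

text \<open>The real part of a holomorphic function is harmonic: the pure second partials
  are Re F'' and Re (i^2 F''), which cancel.\<close>
lemma harmonic_on_Re_holomorphic:
  fixes F :: "complex \<Rightarrow> complex"
  assumes S: "open S" and hol: "F holomorphic_on S"
  shows "harmonic_on S (\<lambda>z. Re (F z))"
proof -
  define u where "u = (\<lambda>z. Re (F z))"
  define F1 where "F1 = deriv F"
  define F2 where "F2 = deriv F1"
  have hol1: "F1 holomorphic_on S" unfolding F1_def using hol S by (rule holomorphic_deriv)
  have hol2: "F2 holomorphic_on S" unfolding F2_def using hol1 S by (rule holomorphic_deriv)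
  have dF: "(F has_field_derivative F1 z) (at z)" if "z \<in> S" for z
    unfolding F1_def using hol S that by (rule holomorphic_derivI)
  have dF1: "(F1 has_field_derivative F2 z) (at z)" if "z \<in> S" for z
    unfolding F2_def using hol1 S that by (rule holomorphic_derivI)
  have diF1: "((\<lambda>y. \<i> * F1 y) has_field_derivative \<i> * F2 z) (at z)" if "z \<in> S" for z
    using dF1[OF that] by (auto intro!: derivative_eq_intros)
  have pxu: "px u z = Re (F1 z)" and pyu: "py u z = Re (\<i> * F1 z)" if "z \<in> S" for z
    using partials_of_Re[OF S that _ dF[OF that]] u_def by auto
  have pxx: "px (px u) z = Re (F2 z)" and pyx: "py (px u) z = Re (\<i> * F2 z)" if "z \<in> S" for z
    using partials_of_Re[OF S that _ dF1[OF that]] pxu by auto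
  have pxy: "px (py u) z = Re (\<i> * F2 z)" and pyy: "py (py u) z = - Re (F2 z)" if "z \<in> S" for z
    using partials_of_Re[OF S that _ diF1[OF that]] pyu by auto
  have cF2: "continuous_on S F2" using hol2 by (rule holomorphic_on_imp_continuous_on)
  have "u differentiable_on S"
    using differentiable_Re[OF S _ _ dF] u_def by (auto intro!: differentiable_at_imp_differentiable_on)
  moreover have "px u differentiable_on S" "py u differentiable_on S"
    using differentiable_Re[OF S _ pxu dF1] differentiable_Re[OF S _ pyu diF1]
    by (auto intro!: differentiable_at_imp_differentiable_on)
  moreover have "continuous_on S (px (px u))" "continuous_on S (py (px u))"
    "continuous_on S (px (py u))" "continuous_on S (py (py u))"
    using pxx pyx pxy pyy
    by (auto intro!: continuous_intros cF2 cong: continuous_on_cong)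
  moreover have "\<forall>z\<in>S. px (px u) z + py (py u) z = 0" using pxx pyy by simp
  ultimately show ?thesis using S unfolding harmonic_on_def u_def by blast
qed

section \<open>Lacunary series on the unit disc\<close>

text \<open>A series \<Sum>_k a_k z^{N_k} (with arbitrary exponents N_k) whose moduli converge
  at every radius r < 1 defines a holomorphic function on the unit disc: it is locally
  dominated by the convergent series at the radius (1 + |x|)/2.\<close>
lemma lacunary_series_holomorphic:
  fixes a :: "nat \<Rightarrow> complex" and N :: "nat \<Rightarrow> nat"
  assumes summ: "\<And>r. 0 \<le> r \<Longrightarrow> r < 1 \<Longrightarrow> summable (\<lambda>k. norm (a k) * r ^ N k)"
  shows "(\<lambda>z. \<Sum>k. a k * z ^ N k) holomorphic_on ball 0 1"
proof -
  have der: "((\<lambda>z. a k * z ^ N k) has_field_derivative a k * (of_nat (N k) * z ^ (N k - 1))) (at z)"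
    for k z by (auto intro!: derivative_eq_intros)
  have dominated: "\<exists>d h. 0 < d \<and> summable h \<and>
      (\<forall>\<^sub>F k in sequentially. \<forall>y\<in>ball x d \<inter> ball 0 1. norm (a k * y ^ N k) \<le> h k)"
    if x: "x \<in> ball 0 1" for x
  proof -
    define \<rho> where "\<rho> = (1 + norm x) / 2"
    have \<rho>: "0 \<le> \<rho>" "\<rho> < 1" using x by (auto simp: \<rho>_def)
    have "norm (a k * y ^ N k) \<le> norm (a k) * \<rho> ^ N k"
      if "y \<in> ball x ((1 - norm x) / 2)" for k y
    proof -
      have "norm y \<le> \<rho>"
        using that norm_triangle_ineq2[of y x] by (auto simp: \<rho>_def dist_norm norm_minus_commute)
      then show ?thesis
        by (simp add: norm_mult norm_power mult_left_mono power_mono)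
    qed
    then show ?thesis using x summ[OF \<rho>]
      by (intro exI[of _ "(1 - norm x) / 2"] exI[of _ "\<lambda>k. norm (a k) * \<rho> ^ N k"]) auto
  qed
  obtain g g' where g: "\<forall>x\<in>ball 0 1. (\<lambda>k. a k * x ^ N k) sums g x \<and>
      (\<lambda>k. a k * (of_nat (N k) * x ^ (N k - 1))) sums g' x \<and> (g has_field_derivative g' x) (at x)"
    using series_and_derivative_comparison_local[OF open_ball der dominated] by blast
  have sum_eq: "g y = (\<Sum>k. a k * y ^ N k)" if "y \<in> ball 0 1" for y
    using g that by (simp add: sums_iff)
  have "((\<lambda>z. \<Sum>k. a k * z ^ N k) has_field_derivative g' x) (at x)" if "x \<in> ball 0 1" for x
  proof -
    have "(g has_field_derivative g' x) (at x)" using g that by blast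
    from this open_ball that sum_eq show ?thesis by (rule has_field_derivative_transform_within_open)
  qed
  then show ?thesis unfolding holomorphic_on_open[OF open_ball] by blast
qed

section \<open>Weights with the doubling property, sampled at dyadic points\<close>

text \<open>The growth assumptions on v.\<close>
locale doubling_weight =
  fixes v :: "real \<Rightarrow> real" and D :: real
  assumes v_ge1: "\<forall>r\<in>{0..<1}. v r \<ge> 1"
    and v_mono: "mono_on {0..<1} v"
    and v_lim: "filterlim v at_top (at_left 1)"
    and D_ge1: "D \<ge> 1"
    and doubling: "\<forall>d\<in>{0<..1/2}. v (1 - d) \<le> D * v (1 - 2 * d)"
begin

definition dyadic_pt :: "nat \<Rightarrow> real" where
  "dyadic_pt l = 1 - inverse (2 ^ l)"

lemma gfun_dyadic: "gfun v (2 ^ l) = v (dyadic_pt l)"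
  by (simp add: gfun_def dyadic_pt_def)

lemma dyadic_pt_in: "dyadic_pt l \<in> {0..<1}"
  by (simp add: dyadic_pt_def inverse_le_1_iff)

lemma dyadic_pt_mono: "l \<le> l' \<Longrightarrow> dyadic_pt l \<le> dyadic_pt l'"
  unfolding dyadic_pt_def by (simp add: le_imp_inverse_le power_increasing)

lemma dyadic_pt_exceeds:
  assumes "r < 1" obtains l where "r < dyadic_pt l"
proof -
  obtain l where "(1/2::real) ^ l < 1 - r"
    using real_arch_pow_inv[of "1 - r" "1/2"] assms by auto
  then have "r < dyadic_pt l" by (simp add: dyadic_pt_def power_one_over field_simps)
  then show ?thesis by (rule that)
qed

lemma gfun_ge1: "gfun v (2 ^ l) \<ge> 1"
  using v_ge1 dyadic_pt_in[of l] by (simp add: gfun_dyadic)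

lemma gfun_mono: "l \<le> l' \<Longrightarrow> gfun v (2 ^ l) \<le> gfun v (2 ^ l')"
  unfolding gfun_dyadic by (rule mono_onD[OF v_mono dyadic_pt_in dyadic_pt_in dyadic_pt_mono])

lemma gfun_le_v: "dyadic_pt l \<le> r \<Longrightarrow> r < 1 \<Longrightarrow> gfun v (2 ^ l) \<le> v r"
  unfolding gfun_dyadic using dyadic_pt_in[of l] by (intro mono_onD[OF v_mono]) auto

lemma gfun_doubling: "gfun v (2 ^ Suc l) \<le> D * gfun v (2 ^ l)"
proof -
  define d where "d = inverse ((2::real) ^ Suc l)"
  have "d \<in> {0<..1/2}" unfolding d_def by (auto simp: field_simps)
  then have "v (1 - d) \<le> D * v (1 - 2 * d)" using doubling by blast
  moreover have "2 * d = inverse ((2::real) ^ l)" unfolding d_def by (simp add: field_simps)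
  ultimately show ?thesis unfolding gfun_def d_def by simp
qed

lemma gfun_unbounded: "\<exists>l. gfun v (2 ^ l) > M"
proof -
  have "eventually (\<lambda>x. M + 1 \<le> v x) (at_left 1)"
    using v_lim by (simp add: filterlim_at_top)
  then obtain e where e: "e < 1" "\<And>y. e < y \<Longrightarrow> y < 1 \<Longrightarrow> M + 1 \<le> v y"
    by (auto simp: eventually_at_left_field)
  obtain l where "e < dyadic_pt l" using dyadic_pt_exceeds[OF e(1)] .
  then have "M + 1 \<le> gfun v (2 ^ l)" unfolding gfun_dyadic using dyadic_pt_in[of l] by (intro e(2)) auto
  then show ?thesis by (intro exI[of _ l]) simp
qed

end

lemma sum_lessThan_add_split:
  fixes f :: "nat \<Rightarrow> 'a::comm_monoid_add"
  shows "(\<Sum>k<j + n. f k) = (\<Sum>k<j. f k) + (\<Sum>i<n. f (j + i))"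
  by (induction n) (auto simp: add.assoc ac_simps)

section \<open>The lacunary sequence b and its coefficients\<close>

locale lacunary_weight = doubling_weight +
  fixes A :: real
  assumes A_gt1: "A > 1"
begin

definition b :: "nat \<Rightarrow> nat" where "b k = bseq v A k"
definition c :: "nat \<Rightarrow> real" where "c k = gfun v (2 ^ b k)"
definition N :: "nat \<Rightarrow> nat" where "N k = 2 ^ b k"
definition t :: "nat \<Rightarrow> real" where "t k = dyadic_pt (b k)"

lemma c_ge1: "c k \<ge> 1"
  unfolding c_def by (rule gfun_ge1)

lemma c_nonneg: "c k \<ge> 0"
  using c_ge1[of k] by simp

lemma b_Suc: "b (Suc k) = (LEAST l. gfun v (2 ^ l) > A * c k)"
  by (simp add: b_def c_def)

lemma c_Suc_gt: "c (Suc k) > A * c k"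
proof -
  obtain l where "gfun v (2 ^ l) > A * c k" using gfun_unbounded by blast
  then show ?thesis unfolding c_def[of "Suc k"] b_Suc by (rule LeastI)
qed

lemma b_less_Suc: "b k < b (Suc k)"
proof (rule ccontr)
  assume "\<not> b k < b (Suc k)"
  then have "c (Suc k) \<le> c k" unfolding c_def by (intro gfun_mono) simp
  moreover have "A * c k \<ge> c k" using A_gt1 c_ge1[of k] by simp
  ultimately show False using c_Suc_gt[of k] by simp
qed

lemma c_Suc_le: "c (Suc k) \<le> D * A * c k"
proof -
  obtain l where l: "b (Suc k) = Suc l" using b_less_Suc[of k] by (cases "b (Suc k)") auto
  have "\<not> gfun v (2 ^ l) > A * c k"
  proof
    assume "gfun v (2 ^ l) > A * c k"
    then have "b (Suc k) \<le> l" unfolding b_Suc by (rule Least_le)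
    then show False using l by simp
  qed
  then have "D * gfun v (2 ^ l) \<le> D * (A * c k)" using D_ge1 by (intro mult_left_mono) auto
  then show ?thesis using gfun_doubling[of l] l unfolding c_def by simp
qed

lemma b_add: "b j + i \<le> b (j + i)"
proof (induction i)
  case (Suc i) then show ?case using b_less_Suc[of "j + i"] by simp
qed simp

lemma c_add_le: "c (j + i) \<le> (D * A) ^ i * c j"
proof (induction i)
  case (Suc i)
  have "c (j + Suc i) \<le> D * A * c (j + i)" using c_Suc_le[of "j + i"] by simp
  also have "\<dots> \<le> D * A * ((D * A) ^ i * c j)" using Suc D_ge1 A_gt1 by (intro mult_left_mono) auto
  finally show ?case by (simp add: mult.assoc)
qed simp

lemma sum_c_le: "(\<Sum>k\<le>m. c k) \<le> A / (A - 1) * c m"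
proof (induction m)
  case 0 then show ?case using A_gt1 c_ge1[of 0] by (simp add: field_simps)
next
  case (Suc m)
  have "c m \<le> c (Suc m) / A" using c_Suc_gt[of m] A_gt1 by (simp add: field_simps)
  then have "A / (A - 1) * c m \<le> A / (A - 1) * (c (Suc m) / A)" using A_gt1 by (intro mult_left_mono) auto
  then have "(\<Sum>k\<le>Suc m. c k) \<le> A / (A - 1) * (c (Suc m) / A) + c (Suc m)" using Suc by simp
  also have "\<dots> = A / (A - 1) * c (Suc m)" using A_gt1 by (simp add: field_simps)
  finally show ?case .
qed

text \<open>Below the radius t_j the monomials z^{N_{j+i}} decay doubly exponentially in i,
  because (1 - 2^{-b_j})^{2^{b_j}} \<le> 1/e and N_{j+i} \<ge> 2^{b_j} 2^i.\<close>
lemma power_decay: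
  assumes r: "0 \<le> r" "r \<le> t j"
  shows "r ^ N (j + i) \<le> exp (- (2 ^ i))"
proof -
  define x where "x = inverse ((2::real) ^ b j)"
  have tj: "t j = 1 - x" "0 \<le> t j"
    using dyadic_pt_in[of "b j"] by (auto simp: t_def x_def dyadic_pt_def)
  have "r ^ N (j + i) \<le> t j ^ N (j + i)" using r by (intro power_mono) auto
  also have "\<dots> \<le> exp (- x) ^ N (j + i)"
    using tj exp_ge_add_one_self[of "-x"] by (intro power_mono) auto
  also have "\<dots> = exp (- (x * real (N (j + i))))"
    by (subst exp_of_nat_mult[symmetric]) (simp add: mult.commute)
  also have "\<dots> \<le> exp (- (2 ^ i))"
  proof -
    have le: "b j \<le> b (j + i)" "i \<le> b (j + i) - b j" using b_add[of j i] by auto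
    have "real (N (j + i)) = 2 ^ b j * 2 ^ (b (j + i) - b j)"
      unfolding N_def using le by (simp add: power_add[symmetric])
    then have "x * real (N (j + i)) = 2 ^ (b (j + i) - b j)" unfolding x_def by simp
    moreover have "(2::real) ^ i \<le> 2 ^ (b (j + i) - b j)" using le by (intro power_increasing) auto
    ultimately show ?thesis by simp
  qed
  finally show ?thesis .
qed

definition S :: real where "S = (\<Sum>i. (D * A) ^ i * exp (- (2 ^ i)))"

lemma S_summable: "summable (\<lambda>i. (D * A) ^ i * exp (- (2 ^ i)))"
proof (rule summable_ratio_test[where c="1/2" and N="nat \<lceil>ln (2 * D * A)\<rceil>"])
  fix n assume n: "nat \<lceil>ln (2 * D * A)\<rceil> \<le> n"
  have DA: "D * A > 0" using D_ge1 A_gt1 by simp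
  have "ln (2 * D * A) \<le> real n" using n by linarith
  also have "real n \<le> 2 ^ n"
    using less_exp[of n] by (metis of_nat_le_iff of_nat_numeral of_nat_power less_imp_le)
  finally have "exp (- (2 ^ n)) \<le> exp (- ln (2 * D * A))" by simp
  also have "\<dots> = 1 / (2 * D * A)"
    using DA by (simp add: exp_minus inverse_eq_divide mult.assoc)
  finally have e: "D * A * exp (- (2 ^ n)) \<le> 1/2" using DA by (simp add: field_simps)
  have "(D * A) ^ Suc n * exp (- (2 ^ Suc n)) = (D * A * exp (- (2 ^ n))) * ((D * A) ^ n * exp (- (2 ^ n)))"
    by (simp add: exp_add[symmetric] algebra_simps)
  also have "\<dots> \<le> 1/2 * ((D * A) ^ n * exp (- (2 ^ n)))"
    using e DA by (intro mult_right_mono) auto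
  finally show "norm ((D * A) ^ Suc n * exp (- (2 ^ Suc n))) \<le> 1/2 * norm ((D * A) ^ n * exp (- (2 ^ n)))"
    using DA by simp
qed simp

lemma S_nonneg: "S \<ge> 0"
  unfolding S_def using D_ge1 A_gt1 by (intro suminf_nonneg S_summable) auto

lemma tail_bound:
  assumes r: "0 \<le> r" "r \<le> t j"
  shows "(\<Sum>i<n. c (j + i) * r ^ N (j + i)) \<le> c j * S"
proof -
  have "(\<Sum>i<n. c (j + i) * r ^ N (j + i)) \<le> (\<Sum>i<n. c j * ((D * A) ^ i * exp (- (2 ^ i))))"
  proof (rule sum_mono)
    fix i
    have "c (j + i) * r ^ N (j + i) \<le> ((D * A) ^ i * c j) * exp (- (2 ^ i))"
      using c_add_le[of j i] power_decay[OF r, of i] c_ge1[of "j + i"] r by (intro mult_mono) auto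
    then show "c (j + i) * r ^ N (j + i) \<le> c j * ((D * A) ^ i * exp (- (2 ^ i)))"
      by (simp add: algebra_simps)
  qed
  also have "\<dots> = c j * (\<Sum>i<n. (D * A) ^ i * exp (- (2 ^ i)))" by (simp add: sum_distrib_left)
  also have "\<dots> \<le> c j * S" unfolding S_def using c_ge1[of j] D_ge1 A_gt1
    by (intro mult_left_mono sum_le_suminf S_summable) auto
  finally show ?thesis .
qed

text \<open>The radii t_k approach 1, since b_k \<ge> k.\<close>
lemma t_exceeds:
  assumes "r < 1" obtains k where "r < t k"
proof -
  obtain k where k: "r < dyadic_pt k" using dyadic_pt_exceeds[OF assms] .
  have "k \<le> b k" using b_add[of 0 k] by simp
  then have "r < t k" unfolding t_def using k dyadic_pt_mono by (meson less_le_trans)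
  then show ?thesis by (rule that)
qed

definition B :: real where "B = A / (A - 1) + D * A * S + D * S"

lemma B_pos: "B > 0"
proof -
  have "A / (A - 1) > 0" using A_gt1 by simp
  moreover have "D * A * S \<ge> 0" "D * S \<ge> 0" using D_ge1 A_gt1 S_nonneg by auto
  ultimately show ?thesis unfolding B_def by linarith
qed

text \<open>If
  t_m \<le> r < t_{m+1}, the head (k \<le> m) is bounded via c_m \<le> v(r) and the tail via c_{m+1} \<le> DA c_m;
  if r < t_0, the whole sum is a tail with c_0 \<le> D v(0) \<le> D v(r).\<close>
lemma partial_sum_bound:
  assumes r: "0 \<le> r" "r < 1"
  shows "(\<Sum>k<n. c k * r ^ N k) \<le> B * v r"
proof -
  have vr: "v r \<ge> 1" using v_ge1 r by auto
  have nn: "0 \<le> c k * r ^ N k" for k using c_nonneg r by simp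
  have DA: "D * A \<ge> 0" "A / (A - 1) \<ge> 0" using D_ge1 A_gt1 by auto
  have "(\<Sum>k<n. c k * r ^ N k) \<le> (A / (A - 1) + D * A * S + D * S) * v r"
  proof (cases "r < t 0")
    case True
    have "c 0 \<le> D * v 0"
      using gfun_doubling[of 0] by (simp add: c_def b_def gfun_def)
    also have "\<dots> \<le> D * v r" using r D_ge1 by (intro mult_left_mono mono_onD[OF v_mono]) auto
    finally have c0: "c 0 \<le> D * v r" .
    have "(\<Sum>k<n. c k * r ^ N k) \<le> c 0 * S" using tail_bound[of r 0 n] True r by simp
    also have "\<dots> \<le> D * v r * S" using c0 S_nonneg by (rule mult_right_mono)
    moreover have "0 \<le> (A / (A - 1) + D * A * S) * v r" using vr DA S_nonneg by simp
    moreover have "(A / (A - 1) + D * A * S + D * S) * v r = (A / (A - 1) + D * A * S) * v r + D * v r * S"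
      by (simp add: algebra_simps)
    ultimately show ?thesis by linarith
  next
    case False
    define p where "p = (LEAST k. r < t k)"
    have rp: "r < t p" unfolding p_def using t_exceeds[OF r(2)] by (metis LeastI)
    obtain m where m: "p = Suc m" using rp False by (cases p) auto
    have "t m \<le> r" using not_less_Least[of m "\<lambda>k. r < t k"] m unfolding p_def by auto
    then have cm: "c m \<le> v r" unfolding c_def t_def using r(2) by (rule gfun_le_v)
    have "(\<Sum>k<n. c k * r ^ N k) \<le> (\<Sum>k<Suc m + n. c k * r ^ N k)"
      using nn by (intro sum_mono2) auto
    also have "\<dots> = (\<Sum>k<Suc m. c k * r ^ N k) + (\<Sum>i<n. c (Suc m + i) * r ^ N (Suc m + i))"
      by (rule sum_lessThan_add_split)
    also have "(\<Sum>k<Suc m. c k * r ^ N k) \<le> (\<Sum>k\<le>m. c k)"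
      unfolding lessThan_Suc_atMost using r c_nonneg by (intro sum_mono) (auto intro!: mult_left_le power_le_one)
    also have "\<dots> \<le> A / (A - 1) * v r" using sum_c_le[of m] cm DA by (meson mult_left_mono order_trans)
    also have "(\<Sum>i<n. c (Suc m + i) * r ^ N (Suc m + i)) \<le> c (Suc m) * S"
      using rp m r by (intro tail_bound) auto
    also have "\<dots> \<le> D * A * c m * S" using c_Suc_le[of m] S_nonneg by (intro mult_right_mono) auto
    also have "\<dots> \<le> D * A * v r * S" using cm S_nonneg DA by (intro mult_right_mono mult_left_mono) auto
    finally have "(\<Sum>k<n. c k * r ^ N k) \<le> (A / (A - 1) + D * A * S) * v r"
      by (simp add: algebra_simps)
    moreover have "0 \<le> D * S * v r" using vr S_nonneg D_ge1 by simp
    ultimately show ?thesis by (simp add: distrib_right)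
  qed
  then show ?thesis unfolding B_def .
qed

lemma series_summable: "0 \<le> r \<Longrightarrow> r < 1 \<Longrightarrow> summable (\<lambda>k. c k * r ^ N k)"
  by (rule summableI_nonneg_bounded[OF _ partial_sum_bound]) (use c_nonneg in auto)

lemma series_bound: "0 \<le> r \<Longrightarrow> r < 1 \<Longrightarrow> (\<Sum>k. c k * r ^ N k) \<le> B * v r"
  by (rule suminf_le_const[OF series_summable partial_sum_bound])

definition F :: "complex \<Rightarrow> complex" where
  "F z = (\<Sum>k. complex_of_real (c k) * z ^ N k)"

lemma F_harmonic: "harmonic_on (ball 0 1) (\<lambda>z. Re (F z))"
proof -
  have "F holomorphic_on ball 0 1"
    unfolding F_def using series_summable c_nonneg by (intro lacunary_series_holomorphic) simp
  then show ?thesis by (rule harmonic_on_Re_holomorphic[OF open_ball])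
qed

lemma F_growth:
  assumes z: "norm z < 1" shows "\<bar>Re (F z)\<bar> \<le> B * v (norm z)"
proof -
  have nrm: "norm (complex_of_real (c k) * z ^ N k) = c k * norm z ^ N k" for k
    using c_nonneg by (simp add: norm_mult norm_power)
  have "\<bar>Re (F z)\<bar> \<le> norm (F z)" by (rule abs_Re_le_cmod)
  also have "\<dots> \<le> (\<Sum>k. c k * norm z ^ N k)"
    unfolding F_def using summable_norm[of "\<lambda>k. complex_of_real (c k) * z ^ N k"]
      series_summable[of "norm z"] z nrm by simp
  also have "\<dots> \<le> B * v (norm z)" using series_bound[of "norm z"] z by simp
  finally show ?thesis .
qed

lemma Re_F_in_hinf: "(\<lambda>z. Re (F z)) \<in> hinf v"
  unfolding hinf_def using F_harmonic F_growth B_pos by auto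

end

theorem lemma8:
  fixes v :: "real \<Rightarrow> real" and A D :: real
  assumes v_ge1: "\<forall>r\<in>{0..<1}. v r \<ge> 1"
    and v_mono: "mono_on {0..<1} v"
    and v_cont: "continuous_on {0..<1} v"
    and v_0: "v 0 = 1"
    and v_lim: "filterlim v at_top (at_left 1)"
    and D: "D \<ge> 1" "\<forall>d\<in>{0<..1/2}. v (1 - d) \<le> D * v (1 - 2 * d)"
    and A: "A > 1"
  shows "(\<lambda>z. Re (\<Sum>k. complex_of_real (gfun v (2 ^ bseq v A k)) * z ^ (2 ^ bseq v A k)))
           \<in> hinf v"
proof -
  interpret lacunary_weight v D A
    using v_ge1 v_mono v_lim D A by unfold_locales auto
  have "(\<lambda>z. Re (\<Sum>k. complex_of_real (gfun v (2 ^ bseq v A k)) * z ^ (2 ^ bseq v A k))) = (\<lambda>z. Re (F z))"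
    by (simp add: F_def c_def N_def b_def)
  with Re_F_in_hinf show ?thesis by simp
qed

end
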